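(* Let $\mathcal{M}$ be an $n$-abelian category, $\mathcal{A}$ an abelian category and $F:\mathcal{M}\to\mathcal{A}$ a covariant additive functor. (i) If $F$ is left $n$-exact and $f:X\to Y$ is a weak kernel of $g:Y\to Z$, then $F(X)\xrightarrow{F(f)}F(Y)\xrightarrow{F(g)}F(Z)$ is exact. (ii) If $F$ is right $n$-exact and $g:Y\to Z$ is a weak cokernel of $f:X\to Y$, then $F(X)\xrightarrow{F(f)}F(Y)\xrightarrow{F(g)}F(Z)$ is exact.
   Context: A weak cokernel of $f:A\to B$ is a morphism $g:B\to C$ such that $\mathcal{M}(C,W)\to\mathcal{M}(B,W)\to\mathcal{M}(A,W)$ is exact for all $W$ (in particular $gf=0$); a weak kernel is defined dually. A complex $X^0\xrightarrow{d^0}\cdots\xrightarrow{d^n}X^{n+1}$ is right $n$-exact if $0\to\mathcal{M}(X^{n+1},W)\to\cdots\to\mathcal{M}(X^0,W)$ is exact for all $W$, left $n$-exact if $0\to\mathcal{M}(W,X^0)\to\cdots\to\mathcal{M}(W,X^{n+1})$ is exact for all $W$. $F$ is left $n$-exact if it sends left $n$-exact sequences to exact sequences $0\to F(X^0)\to\cdots\to F(X^{n+1})$, and right $n$-exact if it sends right $n$-exact sequences to exact sequences $F(X^0)\to\cdots\to F(X^{n+1})\to0$. An $n$-abelian category is an idempotent complete additive category in which every morphism has an $n$-kernel and an $n$-cokernel, and in which every monomorphism (resp. epimorphism) together with any of its $n$-cokernels (resp. $n$-kernels) forms an $n$-exact sequence. *)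

theory Defs
  imports Main
begin

text \<open>A category with abelian-group enriched hom-sets, given by explicit data.
  cmp C g f is the composite g after f.\<close>

record ('o, 'm) cat_data =
  ob   :: "'o set"
  ar   :: "'m set"
  dm   :: "'m \<Rightarrow> 'o"
  cd   :: "'m \<Rightarrow> 'o"
  cmp  :: "'m \<Rightarrow> 'm \<Rightarrow> 'm"
  idm  :: "'o \<Rightarrow> 'm"
  addm :: "'m \<Rightarrow> 'm \<Rightarrow> 'm"
  zm   :: "'o \<Rightarrow> 'o \<Rightarrow> 'm"
  negm :: "'m \<Rightarrow> 'm"

definition hom :: "('o, 'm) cat_data \<Rightarrow> 'o \<Rightarrow> 'o \<Rightarrow> 'm set" where
  "hom C X Y = {f \<in> ar C. dm C f = X \<and> cd C f = Y}"

definition preadditive :: "('o, 'm) cat_data \<Rightarrow> bool" where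
  "preadditive C \<longleftrightarrow>
     (\<forall>f\<in>ar C. dm C f \<in> ob C \<and> cd C f \<in> ob C) \<and>
     (\<forall>X\<in>ob C. idm C X \<in> hom C X X) \<and>
     (\<forall>f\<in>ar C. \<forall>g\<in>ar C. dm C g = cd C f \<longrightarrow> cmp C g f \<in> hom C (dm C f) (cd C g)) \<and>
     (\<forall>f\<in>ar C. \<forall>g\<in>ar C. \<forall>h\<in>ar C. dm C g = cd C f \<longrightarrow> dm C h = cd C g \<longrightarrow>
        cmp C h (cmp C g f) = cmp C (cmp C h g) f) \<and>
     (\<forall>f\<in>ar C. cmp C (idm C (cd C f)) f = f \<and> cmp C f (idm C (dm C f)) = f) \<and>
     (\<forall>X\<in>ob C. \<forall>Y\<in>ob C.
        zm C X Y \<in> hom C X Y \<and>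
        (\<forall>f\<in>hom C X Y. \<forall>g\<in>hom C X Y. addm C f g \<in> hom C X Y) \<and>
        (\<forall>f\<in>hom C X Y. negm C f \<in> hom C X Y) \<and>
        (\<forall>f\<in>hom C X Y. \<forall>g\<in>hom C X Y. \<forall>h\<in>hom C X Y.
           addm C (addm C f g) h = addm C f (addm C g h)) \<and>
        (\<forall>f\<in>hom C X Y. \<forall>g\<in>hom C X Y. addm C f g = addm C g f) \<and>
        (\<forall>f\<in>hom C X Y. addm C (zm C X Y) f = f) \<and>
        (\<forall>f\<in>hom C X Y. addm C (negm C f) f = zm C X Y)) \<and>
     (\<forall>X\<in>ob C. \<forall>Y\<in>ob C. \<forall>Z\<in>ob C.
        (\<forall>f\<in>hom C X Y. \<forall>f'\<in>hom C X Y. \<forall>g\<in>hom C Y Z.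
           cmp C g (addm C f f') = addm C (cmp C g f) (cmp C g f')) \<and>
        (\<forall>f\<in>hom C X Y. \<forall>g\<in>hom C Y Z. \<forall>g'\<in>hom C Y Z.
           cmp C (addm C g g') f = addm C (cmp C g f) (cmp C g' f)))"

definition zero_object :: "('o, 'm) cat_data \<Rightarrow> 'o \<Rightarrow> bool" where
  "zero_object C Z \<longleftrightarrow> Z \<in> ob C \<and>
     (\<forall>X\<in>ob C. (\<exists>!f. f \<in> hom C Z X) \<and> (\<exists>!f. f \<in> hom C X Z))"

definition is_biproduct ::
  "('o, 'm) cat_data \<Rightarrow> 'o \<Rightarrow> 'o \<Rightarrow> 'o \<Rightarrow> 'm \<Rightarrow> 'm \<Rightarrow> 'm \<Rightarrow> 'm \<Rightarrow> bool" where
  "is_biproduct C X1 X2 S i1 i2 p1 p2 \<longleftrightarrow> S \<in> ob C \<and>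
     i1 \<in> hom C X1 S \<and> i2 \<in> hom C X2 S \<and> p1 \<in> hom C S X1 \<and> p2 \<in> hom C S X2 \<and>
     cmp C p1 i1 = idm C X1 \<and> cmp C p2 i2 = idm C X2 \<and>
     cmp C p2 i1 = zm C X1 X2 \<and> cmp C p1 i2 = zm C X2 X1 \<and>
     addm C (cmp C i1 p1) (cmp C i2 p2) = idm C S"

definition additive :: "('o, 'm) cat_data \<Rightarrow> bool" where
  "additive C \<longleftrightarrow> preadditive C \<and> (\<exists>Z. zero_object C Z) \<and>
     (\<forall>X1\<in>ob C. \<forall>X2\<in>ob C. \<exists>S i1 i2 p1 p2. is_biproduct C X1 X2 S i1 i2 p1 p2)"

definition idempotent_complete :: "('o, 'm) cat_data \<Rightarrow> bool" where
  "idempotent_complete C \<longleftrightarrow>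
     (\<forall>X\<in>ob C. \<forall>e\<in>hom C X X. cmp C e e = e \<longrightarrow>
        (\<exists>Y\<in>ob C. \<exists>r\<in>hom C X Y. \<exists>s\<in>hom C Y X. cmp C r s = idm C Y \<and> cmp C s r = e))"

definition mono :: "('o, 'm) cat_data \<Rightarrow> 'm \<Rightarrow> bool" where
  "mono C f \<longleftrightarrow> f \<in> ar C \<and>
     (\<forall>g\<in>ar C. \<forall>h\<in>ar C. cd C g = dm C f \<longrightarrow> cd C h = dm C f \<longrightarrow> dm C g = dm C h \<longrightarrow>
        cmp C f g = cmp C f h \<longrightarrow> g = h)"

definition epi :: "('o, 'm) cat_data \<Rightarrow> 'm \<Rightarrow> bool" where
  "epi C f \<longleftrightarrow> f \<in> ar C \<and>
     (\<forall>g\<in>ar C. \<forall>h\<in>ar C. dm C g = cd C f \<longrightarrow> dm C h = cd C f \<longrightarrow> cd C g = cd C h \<longrightarrow>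
        cmp C g f = cmp C h f \<longrightarrow> g = h)"

definition is_kernel :: "('o, 'm) cat_data \<Rightarrow> 'm \<Rightarrow> 'm \<Rightarrow> bool" where
  "is_kernel C g k \<longleftrightarrow> g \<in> ar C \<and> k \<in> ar C \<and> cd C k = dm C g \<and>
     cmp C g k = zm C (dm C k) (cd C g) \<and>
     (\<forall>h\<in>ar C. cd C h = dm C g \<longrightarrow> cmp C g h = zm C (dm C h) (cd C g) \<longrightarrow>
        (\<exists>!u. u \<in> hom C (dm C h) (dm C k) \<and> cmp C k u = h))"

definition is_cokernel :: "('o, 'm) cat_data \<Rightarrow> 'm \<Rightarrow> 'm \<Rightarrow> bool" where
  "is_cokernel C f c \<longleftrightarrow> f \<in> ar C \<and> c \<in> ar C \<and> dm C c = cd C f \<and>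
     cmp C c f = zm C (dm C f) (cd C c) \<and>
     (\<forall>h\<in>ar C. dm C h = cd C f \<longrightarrow> cmp C h f = zm C (dm C f) (cd C h) \<longrightarrow>
        (\<exists>!u. u \<in> hom C (cd C c) (cd C h) \<and> cmp C u c = h))"

definition abelian :: "('o, 'm) cat_data \<Rightarrow> bool" where
  "abelian C \<longleftrightarrow> additive C \<and>
     (\<forall>f\<in>ar C. (\<exists>k. is_kernel C f k) \<and> (\<exists>c. is_cokernel C f c)) \<and>
     (\<forall>m. mono C m \<longrightarrow> (\<exists>c. is_cokernel C m c \<and> is_kernel C c m)) \<and>
     (\<forall>e. epi C e \<longrightarrow> (\<exists>k. is_kernel C e k \<and> is_cokernel C k e))"

text \<open>Exactness of A --f--> B --g--> C in an abelian category: g f = 0 and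
  the image of f is a kernel of g (f = m e with e epi and m a kernel of g).\<close>
definition exact_at :: "('o, 'm) cat_data \<Rightarrow> 'm \<Rightarrow> 'm \<Rightarrow> bool" where
  "exact_at C f g \<longleftrightarrow> f \<in> ar C \<and> g \<in> ar C \<and> cd C f = dm C g \<and>
     cmp C g f = zm C (dm C f) (cd C g) \<and>
     (\<exists>m e. epi C e \<and> is_kernel C g m \<and> dm C m = cd C e \<and> f = cmp C m e)"

definition is_seq :: "('o, 'm) cat_data \<Rightarrow> nat \<Rightarrow> (nat \<Rightarrow> 'o) \<Rightarrow> (nat \<Rightarrow> 'm) \<Rightarrow> bool" where
  "is_seq C n X d \<longleftrightarrow> (\<forall>i\<le>n. d i \<in> hom C (X i) (X (Suc i)))"

text \<open>Left n-exact: 0 -> M(W,X 0) -> ... -> M(W,X (n+1)) exact for all W.\<close>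
definition left_n_exact_seq :: "('o, 'm) cat_data \<Rightarrow> nat \<Rightarrow> (nat \<Rightarrow> 'o) \<Rightarrow> (nat \<Rightarrow> 'm) \<Rightarrow> bool" where
  "left_n_exact_seq C n X d \<longleftrightarrow> is_seq C n X d \<and>
     (\<forall>W\<in>ob C.
        (\<forall>h\<in>hom C W (X 0). cmp C (d 0) h = zm C W (X 1) \<longrightarrow> h = zm C W (X 0)) \<and>
        (\<forall>j<n. \<forall>h\<in>hom C W (X (Suc j)).
           cmp C (d (Suc j)) h = zm C W (X (Suc (Suc j))) \<longleftrightarrow>
           (\<exists>u\<in>hom C W (X j). h = cmp C (d j) u)))"

text \<open>Right n-exact: 0 -> M(X (n+1),W) -> ... -> M(X 0,W) exact for all W.\<close>
definition right_n_exact_seq :: "('o, 'm) cat_data \<Rightarrow> nat \<Rightarrow> (nat \<Rightarrow> 'o) \<Rightarrow> (nat \<Rightarrow> 'm) \<Rightarrow> bool" where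
  "right_n_exact_seq C n X d \<longleftrightarrow> is_seq C n X d \<and>
     (\<forall>W\<in>ob C.
        (\<forall>h\<in>hom C (X (Suc n)) W. cmp C h (d n) = zm C (X n) W \<longrightarrow> h = zm C (X (Suc n)) W) \<and>
        (\<forall>j<n. \<forall>h\<in>hom C (X (Suc j)) W.
           cmp C h (d j) = zm C (X j) W \<longleftrightarrow>
           (\<exists>u\<in>hom C (X (Suc (Suc j))) W. h = cmp C u (d (Suc j)))))"

definition n_exact_seq :: "('o, 'm) cat_data \<Rightarrow> nat \<Rightarrow> (nat \<Rightarrow> 'o) \<Rightarrow> (nat \<Rightarrow> 'm) \<Rightarrow> bool" where
  "n_exact_seq C n X d \<longleftrightarrow> left_n_exact_seq C n X d \<and> right_n_exact_seq C n X d"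

text \<open>(d 0, ..., d (n-1)) is an n-kernel of f = d n.\<close>
definition is_n_kernel :: "('o, 'm) cat_data \<Rightarrow> nat \<Rightarrow> 'm \<Rightarrow> (nat \<Rightarrow> 'o) \<Rightarrow> (nat \<Rightarrow> 'm) \<Rightarrow> bool" where
  "is_n_kernel C n f X d \<longleftrightarrow> d n = f \<and> left_n_exact_seq C n X d"

text \<open>(d 1, ..., d n) is an n-cokernel of f = d 0.\<close>
definition is_n_cokernel :: "('o, 'm) cat_data \<Rightarrow> nat \<Rightarrow> 'm \<Rightarrow> (nat \<Rightarrow> 'o) \<Rightarrow> (nat \<Rightarrow> 'm) \<Rightarrow> bool" where
  "is_n_cokernel C n f X d \<longleftrightarrow> d 0 = f \<and> right_n_exact_seq C n X d"

definition n_abelian :: "('o, 'm) cat_data \<Rightarrow> nat \<Rightarrow> bool" where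
  "n_abelian C n \<longleftrightarrow> additive C \<and> idempotent_complete C \<and>
     (\<forall>f\<in>ar C. (\<exists>X d. is_n_kernel C n f X d) \<and> (\<exists>X d. is_n_cokernel C n f X d)) \<and>
     (\<forall>f X d. mono C f \<longrightarrow> is_n_cokernel C n f X d \<longrightarrow> n_exact_seq C n X d) \<and>
     (\<forall>f X d. epi C f \<longrightarrow> is_n_kernel C n f X d \<longrightarrow> n_exact_seq C n X d)"

definition additive_functor ::
  "('a, 'b) cat_data \<Rightarrow> ('c, 'd) cat_data \<Rightarrow> ('a \<Rightarrow> 'c) \<Rightarrow> ('b \<Rightarrow> 'd) \<Rightarrow> bool" where
  "additive_functor C D Fo Fm \<longleftrightarrow>
     (\<forall>X\<in>ob C. Fo X \<in> ob D) \<and>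
     (\<forall>f\<in>ar C. Fm f \<in> hom D (Fo (dm C f)) (Fo (cd C f))) \<and>
     (\<forall>X\<in>ob C. Fm (idm C X) = idm D (Fo X)) \<and>
     (\<forall>f\<in>ar C. \<forall>g\<in>ar C. dm C g = cd C f \<longrightarrow> Fm (cmp C g f) = cmp D (Fm g) (Fm f)) \<and>
     (\<forall>X\<in>ob C. \<forall>Y\<in>ob C. \<forall>f\<in>hom C X Y. \<forall>g\<in>hom C X Y.
        Fm (addm C f g) = addm D (Fm f) (Fm g))"

definition left_n_exact_functor ::
  "('a, 'b) cat_data \<Rightarrow> ('c, 'd) cat_data \<Rightarrow> nat \<Rightarrow> ('a \<Rightarrow> 'c) \<Rightarrow> ('b \<Rightarrow> 'd) \<Rightarrow> bool" where
  "left_n_exact_functor C D n Fo Fm \<longleftrightarrow>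
     (\<forall>X d. left_n_exact_seq C n X d \<longrightarrow>
        mono D (Fm (d 0)) \<and> (\<forall>j<n. exact_at D (Fm (d j)) (Fm (d (Suc j)))))"

definition right_n_exact_functor ::
  "('a, 'b) cat_data \<Rightarrow> ('c, 'd) cat_data \<Rightarrow> nat \<Rightarrow> ('a \<Rightarrow> 'c) \<Rightarrow> ('b \<Rightarrow> 'd) \<Rightarrow> bool" where
  "right_n_exact_functor C D n Fo Fm \<longleftrightarrow>
     (\<forall>X d. right_n_exact_seq C n X d \<longrightarrow>
        epi D (Fm (d n)) \<and> (\<forall>j<n. exact_at D (Fm (d j)) (Fm (d (Suc j)))))"

definition weak_kernel :: "('o, 'm) cat_data \<Rightarrow> 'm \<Rightarrow> 'm \<Rightarrow> bool" where
  "weak_kernel C f g \<longleftrightarrow> f \<in> ar C \<and> g \<in> ar C \<and> cd C f = dm C g \<and>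
     cmp C g f = zm C (dm C f) (cd C g) \<and>
     (\<forall>W\<in>ob C. \<forall>h\<in>hom C W (dm C g). cmp C g h = zm C W (cd C g) \<longrightarrow>
        (\<exists>u\<in>hom C W (dm C f). cmp C f u = h))"

definition weak_cokernel :: "('o, 'm) cat_data \<Rightarrow> 'm \<Rightarrow> 'm \<Rightarrow> bool" where
  "weak_cokernel C g f \<longleftrightarrow> f \<in> ar C \<and> g \<in> ar C \<and> cd C f = dm C g \<and>
     cmp C g f = zm C (dm C f) (cd C g) \<and>
     (\<forall>W\<in>ob C. \<forall>h\<in>hom C (cd C f) W. cmp C h f = zm C (dm C f) W \<longrightarrow>
        (\<exists>u\<in>hom C (cd C g) W. cmp C u g = h))"

end

theory Submission
  imports Defs
begin

(* For (i), take an n-kernel d of g. Its last differential d_(n-1) is annihilated by g, so it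
   factors as f u through the weak kernel f. Left n-exactness of F makes F(d_(n-1)), F(g) exact;
   as F(d_(n-1)) = F(f) F(u) and F(g) F(f) = 0, the image of F(f) lies between the image of
   F(d_(n-1)) and the kernel of F(g), which coincide.
   For (ii), take an n-cokernel d of f. Its first differential d_1 and the weak cokernel g
   factor through each other, so F(d_1) and F(g) have the same kernel, and F(f), F(d_1) is
   exact by right n-exactness. *)

lemma hom_iff: "f \<in> hom C X Y \<longleftrightarrow> f \<in> ar C \<and> dm C f = X \<and> cd C f = Y"
  by (simp add: hom_def)

lemma preadditive_dm_cd_ob:
  "preadditive C \<Longrightarrow> f \<in> ar C \<Longrightarrow> dm C f \<in> ob C \<and> cd C f \<in> ob C"
  unfolding preadditive_def by (elim conjE) blast

lemma preadditive_hom_ob: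
  "preadditive C \<Longrightarrow> f \<in> hom C X Y \<Longrightarrow> X \<in> ob C \<and> Y \<in> ob C"
  using preadditive_dm_cd_ob by (fastforce simp: hom_iff)

lemma preadditive_comp_in_hom:
  "preadditive C \<Longrightarrow> f \<in> ar C \<Longrightarrow> g \<in> ar C \<Longrightarrow> dm C g = cd C f
   \<Longrightarrow> cmp C g f \<in> hom C (dm C f) (cd C g)"
  unfolding preadditive_def by (elim conjE) blast

lemma preadditive_comp_assoc:
  "preadditive C \<Longrightarrow> f \<in> ar C \<Longrightarrow> g \<in> ar C \<Longrightarrow> h \<in> ar C \<Longrightarrow>
   dm C g = cd C f \<Longrightarrow> dm C h = cd C g \<Longrightarrow> cmp C h (cmp C g f) = cmp C (cmp C h g) f"
  unfolding preadditive_def by (elim conjE) blast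

lemma preadditive_id_in_hom: "preadditive C \<Longrightarrow> X \<in> ob C \<Longrightarrow> idm C X \<in> hom C X X"
  unfolding preadditive_def by (elim conjE) blast

lemma preadditive_comp_id_left: "preadditive C \<Longrightarrow> f \<in> hom C X Y \<Longrightarrow> cmp C (idm C Y) f = f"
  unfolding preadditive_def hom_iff by (elim conjE) blast

lemma preadditive_comp_id_right: "preadditive C \<Longrightarrow> f \<in> hom C X Y \<Longrightarrow> cmp C f (idm C X) = f"
  unfolding preadditive_def hom_iff by (elim conjE) blast

lemma preadditive_add_self_eq_zero:
  assumes C: "preadditive C" and ob: "X \<in> ob C" "Y \<in> ob C"
    and a: "a \<in> hom C X Y" and idem: "addm C a a = a"
  shows "a = zm C X Y"
proof -
  have inv: "addm C (negm C a) a = zm C X Y"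
    and assoc: "addm C (addm C (negm C a) a) a = addm C (negm C a) (addm C a a)"
    and unit: "addm C (zm C X Y) a = a"
    using C ob a unfolding preadditive_def by (elim conjE; meson)+
  have "zm C X Y = addm C (negm C a) (addm C a a)" using inv idem by simp
  also have "\<dots> = a" using assoc inv unit by simp
  finally show ?thesis by simp
qed

lemma preadditive_comp_zero:
  assumes C: "preadditive C" and ob: "X \<in> ob C" "Y \<in> ob C" "Z \<in> ob C"
    and g: "g \<in> hom C Y Z"
  shows "cmp C g (zm C X Y) = zm C X Z"
proof -
  have z: "zm C X Y \<in> hom C X Y" and zz: "addm C (zm C X Y) (zm C X Y) = zm C X Y"
    using C ob unfolding preadditive_def by (elim conjE; meson)+
  have distr: "cmp C g (addm C (zm C X Y) (zm C X Y))
      = addm C (cmp C g (zm C X Y)) (cmp C g (zm C X Y))"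
    using C ob z g unfolding preadditive_def by (elim conjE) meson
  have "cmp C g (zm C X Y) \<in> hom C X Z"
    using preadditive_comp_in_hom[OF C] z g by (auto simp: hom_iff)
  then show ?thesis
    using preadditive_add_self_eq_zero[OF C ob(1,3)] distr zz by simp
qed

lemma preadditive_comp_zero_after_zero:
  assumes C: "preadditive C" and h: "h \<in> ar C" and y: "y \<in> ar C" "cd C h = dm C y"
    and yh: "cmp C y h = zm C (dm C h) (cd C y)" and x: "x \<in> hom C (cd C y) Z"
  shows "cmp C x (cmp C y h) = zm C (dm C h) Z"
proof -
  have "dm C h \<in> ob C" "cd C y \<in> ob C" "Z \<in> ob C"
    using preadditive_dm_cd_ob[OF C] preadditive_hom_ob[OF C x] h y by blast+
  then show ?thesis using preadditive_comp_zero[OF C] x yh by simp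
qed

lemma additive_functor_hom:
  "additive_functor M A Fo Fm \<Longrightarrow> f \<in> hom M X Y \<Longrightarrow> Fm f \<in> hom A (Fo X) (Fo Y)"
  unfolding additive_functor_def hom_iff by blast

lemma additive_functor_comp:
  "additive_functor M A Fo Fm \<Longrightarrow> f \<in> ar M \<Longrightarrow> g \<in> ar M \<Longrightarrow> dm M g = cd M f \<Longrightarrow>
   Fm (cmp M g f) = cmp A (Fm g) (Fm f)"
  unfolding additive_functor_def by blast

lemma additive_functor_comp_zero:
  assumes M: "preadditive M" and A: "preadditive A" and F: "additive_functor M A Fo Fm"
    and fg: "f \<in> ar M" "g \<in> ar M" "cd M f = dm M g"
    and gf: "cmp M g f = zm M (dm M f) (cd M g)"
  shows "cmp A (Fm g) (Fm f) = zm A (dm A (Fm f)) (cd A (Fm g))"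
proof -
  let ?X = "dm M f" and ?Y = "cd M g"
  have ob: "?X \<in> ob M" "?Y \<in> ob M" using preadditive_dm_cd_ob[OF M] fg by auto
  have z: "zm M ?X ?Y \<in> hom M ?X ?Y" and zz: "addm M (zm M ?X ?Y) (zm M ?X ?Y) = zm M ?X ?Y"
    using M ob unfolding preadditive_def by (elim conjE; meson)+
  have add: "Fm (addm M (zm M ?X ?Y) (zm M ?X ?Y)) = addm A (Fm (zm M ?X ?Y)) (Fm (zm M ?X ?Y))"
    using F ob z unfolding additive_functor_def by blast
  have Fz: "Fm (zm M ?X ?Y) \<in> hom A (Fo ?X) (Fo ?Y)"
    and Fob: "Fo ?X \<in> ob A" "Fo ?Y \<in> ob A"
    and comp: "Fm (cmp M g f) = cmp A (Fm g) (Fm f)"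
    and Ff: "Fm f \<in> hom A (Fo (dm M f)) (Fo (cd M f))"
    and Fg: "Fm g \<in> hom A (Fo (dm M g)) (Fo (cd M g))"
    using F ob z fg unfolding additive_functor_def hom_iff by auto
  have "Fm (zm M ?X ?Y) = zm A (Fo ?X) (Fo ?Y)"
    using preadditive_add_self_eq_zero[OF A Fob Fz] add zz by simp
  then show ?thesis using comp gf Ff Fg by (simp add: hom_iff)
qed

lemma left_n_exact_seq_comp_zero:
  assumes C: "preadditive C" and ex: "left_n_exact_seq C n X d" and j: "j < n"
  shows "cmp C (d (Suc j)) (d j) = zm C (X j) (X (Suc (Suc j)))"
proof -
  have dj: "d j \<in> hom C (X j) (X (Suc j))"
    using ex j unfolding left_n_exact_seq_def is_seq_def by simp
  then have Xj: "X j \<in> ob C" using preadditive_hom_ob[OF C] by blast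
  have "d j = cmp C (d j) (idm C (X j))"
    using preadditive_comp_id_right[OF C dj] by simp
  then show ?thesis
    using ex Xj j dj preadditive_id_in_hom[OF C Xj] unfolding left_n_exact_seq_def by blast
qed

lemma right_n_exact_seq_comp_zero:
  assumes C: "preadditive C" and ex: "right_n_exact_seq C n X d" and j: "j < n"
  shows "cmp C (d (Suc j)) (d j) = zm C (X j) (X (Suc (Suc j)))"
proof -
  have dj: "d (Suc j) \<in> hom C (X (Suc j)) (X (Suc (Suc j)))"
    using ex j unfolding right_n_exact_seq_def is_seq_def by simp
  then have X: "X (Suc (Suc j)) \<in> ob C" using preadditive_hom_ob[OF C] by blast
  have "d (Suc j) = cmp C (idm C (X (Suc (Suc j)))) (d (Suc j))"
    using preadditive_comp_id_left[OF C dj] by simp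
  then show ?thesis
    using ex X j dj preadditive_id_in_hom[OF C X] unfolding right_n_exact_seq_def by blast
qed

lemma weak_kernel_factors_n_kernel:
  assumes C: "preadditive C" and wk: "weak_kernel C f g"
    and ker: "is_n_kernel C (Suc k) g X d"
  obtains u where "u \<in> hom C (X k) (dm C f)" "d k = cmp C f u"
proof -
  have ex: "left_n_exact_seq C (Suc k) X d" and g: "d (Suc k) = g"
    using ker unfolding is_n_kernel_def by auto
  have dk: "d k \<in> hom C (X k) (X (Suc k))" and gh: "g \<in> hom C (X (Suc k)) (X (Suc (Suc k)))"
    using ex g unfolding left_n_exact_seq_def is_seq_def by auto
  have "X k \<in> ob C" using preadditive_hom_ob[OF C dk] by blast
  moreover have "cmp C g (d k) = zm C (X k) (cd C g)"
    using left_n_exact_seq_comp_zero[OF C ex, of k] g gh by (simp add: hom_iff)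
  ultimately show ?thesis
    using that wk dk gh unfolding weak_kernel_def by (metis hom_iff)
qed

lemma weak_cokernel_factors_n_cokernel:
  assumes C: "preadditive C" and wc: "weak_cokernel C g f"
    and coker: "is_n_cokernel C (Suc k) f X d"
  obtains u v where "d (Suc 0) = cmp C u g" "u \<in> hom C (cd C g) (X (Suc (Suc 0)))"
    "g = cmp C v (d (Suc 0))" "v \<in> hom C (X (Suc (Suc 0))) (cd C g)"
proof -
  have ex: "right_n_exact_seq C (Suc k) X d" and f: "d 0 = f"
    using coker unfolding is_n_cokernel_def by auto
  have fh: "f \<in> hom C (X 0) (X (Suc 0))" and d1: "d (Suc 0) \<in> hom C (X (Suc 0)) (X (Suc (Suc 0)))"
    using ex f unfolding right_n_exact_seq_def is_seq_def by auto
  have gf: "g \<in> hom C (X (Suc 0)) (cd C g)" "cmp C g (d 0) = zm C (X 0) (cd C g)"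
    using wc fh f unfolding weak_cokernel_def by (auto simp: hom_iff)
  have obs: "X (Suc (Suc 0)) \<in> ob C" "cd C g \<in> ob C"
    using preadditive_hom_ob[OF C] d1 gf(1) by blast+
  have "cmp C (d (Suc 0)) f = zm C (dm C f) (X (Suc (Suc 0)))"
    using right_n_exact_seq_comp_zero[OF C ex, of 0] f fh by (simp add: hom_iff)
  then obtain u where u: "d (Suc 0) = cmp C u g" "u \<in> hom C (cd C g) (X (Suc (Suc 0)))"
    using wc obs(1) d1 fh unfolding weak_cokernel_def by (metis hom_iff)
  obtain v where "g = cmp C v (d (Suc 0))" "v \<in> hom C (X (Suc (Suc 0))) (cd C g)"
    using ex obs(2) gf unfolding right_n_exact_seq_def by blast
  with u show ?thesis using that by blast
qed

lemma is_kernel_factor_unique: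
  assumes "is_kernel C g m" "h \<in> ar C" "cd C h = dm C g"
    "cmp C g h = zm C (dm C h) (cd C g)"
    "x \<in> hom C (dm C h) (dm C m)" "cmp C m x = h"
    "y \<in> hom C (dm C h) (dm C m)" "cmp C m y = h"
  shows "x = y"
  using assms unfolding is_kernel_def by blast

lemma epi_if_comp_epi:
  assumes C: "preadditive C" and wc: "w \<in> ar C" "c \<in> ar C" "cd C c = dm C w"
    and epi: "epi C (cmp C w c)"
  shows "epi C w"
  unfolding epi_def
proof (intro conjI ballI impI)
  show "w \<in> ar C" by fact
  fix a b assume ab: "a \<in> ar C" "b \<in> ar C" "dm C a = cd C w" "dm C b = cd C w"
    "cd C a = cd C b" "cmp C a w = cmp C b w"
  have "cmp C a (cmp C w c) = cmp C b (cmp C w c)"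
    using preadditive_comp_assoc[OF C wc(2,1)] ab wc(3) by metis
  moreover have "cd C (cmp C w c) = cd C w"
    using preadditive_comp_in_hom[OF C wc(2,1)] wc(3) by (simp add: hom_iff)
  ultimately show "a = b" using epi ab unfolding epi_def by metis
qed

lemma exact_at_through_factor:
  assumes C: "preadditive C" and ex: "exact_at C a g"
    and b: "b \<in> ar C" "cd C b = dm C g" "cmp C g b = zm C (dm C b) (cd C g)"
    and c: "c \<in> ar C" "cd C c = dm C b" and a: "a = cmp C b c"
  shows "exact_at C b g"
proof -
  obtain m e where e: "epi C e" and ker: "is_kernel C g m" and me: "dm C m = cd C e" "a = cmp C m e"
    using ex unfolding exact_at_def by blast
  have a_ar: "a \<in> ar C" "cd C a = dm C g" "cmp C g a = zm C (dm C a) (cd C g)"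
    using ex unfolding exact_at_def by auto
  have m: "m \<in> ar C" "cd C m = dm C g" using ker unfolding is_kernel_def by auto
  obtain w where w: "w \<in> hom C (dm C b) (dm C m)" "cmp C m w = b"
    using ker b unfolding is_kernel_def by blast
  have dma: "dm C a = dm C c"
    using preadditive_comp_in_hom[OF C c(1) b(1) c(2)[symmetric]] a by (simp add: hom_iff)
  have e_hom: "e \<in> hom C (dm C a) (dm C m)"
    using preadditive_comp_in_hom[OF C _ m(1)] e me unfolding epi_def by (auto simp: hom_iff)
  have wc_hom: "cmp C w c \<in> hom C (dm C a) (dm C m)"
    using preadditive_comp_in_hom[OF C c(1)] w c(2) dma by (auto simp: hom_iff)
  have "cmp C m (cmp C w c) = a"
    using preadditive_comp_assoc[OF C c(1), of w m] w c(2) m a by (auto simp: hom_iff)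
  then have "e = cmp C w c"
    using is_kernel_factor_unique[OF ker a_ar e_hom me(2)[symmetric] wc_hom] by simp
  then have "epi C w" using epi_if_comp_epi[OF C _ c(1)] w c(2) e by (simp add: hom_iff)
  moreover have "g \<in> ar C" using ex unfolding exact_at_def by blast
  ultimately show ?thesis using b ker w unfolding exact_at_def hom_iff by metis
qed

lemma is_kernel_if_mutual_factor:
  assumes C: "preadditive C" and ker: "is_kernel C g' m"
    and g: "g \<in> ar C" and u: "u \<in> hom C (cd C g) (cd C g')" and v: "v \<in> hom C (cd C g') (cd C g)"
    and g'u: "g' = cmp C u g" and gv: "g = cmp C v g'"
  shows "is_kernel C g m"
proof -
  have g': "g' \<in> ar C" "dm C g' = dm C g"
    using preadditive_comp_in_hom[OF C g, of u] u g'u by (auto simp: hom_iff)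
  have m: "m \<in> ar C" "cd C m = dm C g'" "cmp C g' m = zm C (dm C m) (cd C g')"
    using ker unfolding is_kernel_def by auto
  have "cmp C g m = zm C (dm C m) (cd C g)"
    using preadditive_comp_zero_after_zero[OF C m(1) g'(1) m(2) m(3) v] gv
      preadditive_comp_assoc[OF C m(1) g'(1), of v] m v by (auto simp: hom_iff)
  moreover have "\<exists>!x. x \<in> hom C (dm C h) (dm C m) \<and> cmp C m x = h"
    if h: "h \<in> ar C" "cd C h = dm C g" "cmp C g h = zm C (dm C h) (cd C g)" for h
  proof -
    have "cmp C g' h = zm C (dm C h) (cd C g')"
      using preadditive_comp_zero_after_zero[OF C h(1) g h(2,3) u] g'u
        preadditive_comp_assoc[OF C h(1) g, of u] h(2) u by (auto simp: hom_iff)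
    then show ?thesis using ker h g' unfolding is_kernel_def by auto
  qed
  ultimately show ?thesis using g m g' unfolding is_kernel_def by auto
qed

lemma exact_at_if_mutual_factor:
  assumes C: "preadditive C" and ex: "exact_at C f g'"
    and g: "g \<in> ar C" and u: "u \<in> hom C (cd C g) (cd C g')" and v: "v \<in> hom C (cd C g') (cd C g)"
    and g'u: "g' = cmp C u g" and gv: "g = cmp C v g'"
  shows "exact_at C f g"
proof -
  have f: "f \<in> ar C" "g' \<in> ar C" "cd C f = dm C g'" "cmp C g' f = zm C (dm C f) (cd C g')"
    using ex unfolding exact_at_def by auto
  have "dm C g' = dm C g"
    using preadditive_comp_in_hom[OF C g, of u] u g'u by (simp add: hom_iff)
  moreover have "cmp C g f = zm C (dm C f) (cd C g)"
    using preadditive_comp_zero_after_zero[OF C f(1,2,3,4) v] gv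
      preadditive_comp_assoc[OF C f(1,2), of v] f(3) v by (auto simp: hom_iff)
  moreover have "is_kernel C g m" if "is_kernel C g' m" for m
    using is_kernel_if_mutual_factor[OF C that g u v g'u gv] .
  ultimately show ?thesis using ex g unfolding exact_at_def by auto
qed

lemma left_n_exact_functor_exact_at_weak_kernel:
  assumes M: "preadditive M" and A: "preadditive A" and F: "additive_functor M A Fo Fm"
    and LF: "left_n_exact_functor M A (Suc k) Fo Fm"
    and wk: "weak_kernel M f g" and ker: "is_n_kernel M (Suc k) g X d"
  shows "exact_at A (Fm f) (Fm g)"
proof -
  obtain u where u: "u \<in> hom M (X k) (dm M f)" "d k = cmp M f u"
    using weak_kernel_factors_n_kernel[OF M wk ker] .
  have "exact_at A (Fm (d k)) (Fm g)"
    using LF ker unfolding left_n_exact_functor_def is_n_kernel_def by auto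
  moreover have f: "f \<in> ar M" "g \<in> ar M" "cd M f = dm M g" "cmp M g f = zm M (dm M f) (cd M g)"
    using wk unfolding weak_kernel_def by auto
  moreover have "Fm (d k) = cmp A (Fm f) (Fm u)"
    using additive_functor_comp[OF F, of u f] u f by (simp add: hom_iff)
  moreover have "Fm f \<in> hom A (Fo (dm M f)) (Fo (dm M g))" "Fm g \<in> hom A (Fo (dm M g)) (Fo (cd M g))"
    "Fm u \<in> hom A (Fo (X k)) (Fo (dm M f))"
    using additive_functor_hom[OF F] u f by (auto simp: hom_iff)
  ultimately show ?thesis
    using exact_at_through_factor[OF A] additive_functor_comp_zero[OF M A F f]
    by (simp add: hom_iff)
qed

lemma right_n_exact_functor_exact_at_weak_cokernel:
  assumes M: "preadditive M" and A: "preadditive A" and F: "additive_functor M A Fo Fm"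
    and RF: "right_n_exact_functor M A (Suc k) Fo Fm"
    and wc: "weak_cokernel M g f" and coker: "is_n_cokernel M (Suc k) f X d"
  shows "exact_at A (Fm f) (Fm g)"
proof -
  obtain u v where uv: "d (Suc 0) = cmp M u g" "u \<in> hom M (cd M g) (X (Suc (Suc 0)))"
    "g = cmp M v (d (Suc 0))" "v \<in> hom M (X (Suc (Suc 0))) (cd M g)"
    using weak_cokernel_factors_n_cokernel[OF M wc coker] .
  have "exact_at A (Fm f) (Fm (d (Suc 0)))"
    using RF coker unfolding right_n_exact_functor_def is_n_cokernel_def by auto
  moreover have g: "g \<in> hom M (dm M g) (cd M g)" using wc unfolding weak_cokernel_def hom_iff by auto
  moreover have d1: "d (Suc 0) \<in> hom M (dm M g) (X (Suc (Suc 0)))"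
    using preadditive_comp_in_hom[OF M, of g u] uv(1,2) g by (simp add: hom_iff)
  moreover have "Fm (d (Suc 0)) = cmp A (Fm u) (Fm g)"
    using additive_functor_comp[OF F, of g u] uv(1,2) g by (simp add: hom_iff)
  moreover have "Fm g = cmp A (Fm v) (Fm (d (Suc 0)))"
    using additive_functor_comp[OF F, of "d (Suc 0)" v] uv(3,4) d1 by (simp add: hom_iff)
  moreover have "Fm g \<in> ar A" "Fm u \<in> hom A (cd A (Fm g)) (cd A (Fm (d (Suc 0))))"
    "Fm v \<in> hom A (cd A (Fm (d (Suc 0)))) (cd A (Fm g))"
    using additive_functor_hom[OF F] uv(2,4) g d1 by (auto simp: hom_iff)
  ultimately show ?thesis using exact_at_if_mutual_factor[OF A] by blast
qed

theorem mainTheorem9: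
  fixes M :: "('a, 'b) cat_data" and A :: "('c, 'd) cat_data"
    and n :: nat and Fo :: "'a \<Rightarrow> 'c" and Fm :: "'b \<Rightarrow> 'd"
  assumes "n \<ge> 1"
    and "n_abelian M n"
    and "abelian A"
    and "additive_functor M A Fo Fm"
  shows "(left_n_exact_functor M A n Fo Fm \<longrightarrow>
            (\<forall>f g. weak_kernel M f g \<longrightarrow> exact_at A (Fm f) (Fm g))) \<and>
         (right_n_exact_functor M A n Fo Fm \<longrightarrow>
            (\<forall>f g. weak_cokernel M g f \<longrightarrow> exact_at A (Fm f) (Fm g)))"
proof -
  obtain k where n: "n = Suc k" using assms(1) by (cases n) auto
  have M: "preadditive M" and A: "preadditive A"
    using assms(2,3) unfolding n_abelian_def abelian_def additive_def by auto
  have "\<exists>X d. is_n_kernel M n g X d" if "weak_kernel M f g" for f g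
    using assms(2) that unfolding n_abelian_def weak_kernel_def by blast
  moreover have "\<exists>X d. is_n_cokernel M n f X d" if "weak_cokernel M g f" for f g
    using assms(2) that unfolding n_abelian_def weak_cokernel_def by blast
  ultimately show ?thesis
    using left_n_exact_functor_exact_at_weak_kernel[OF M A assms(4)]
      right_n_exact_functor_exact_at_weak_cokernel[OF M A assms(4)]
    unfolding n by blast
qed

end
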